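(* Let $\Omega$ be either $\mathbb{C}$ with the Euclidean distance or $\mathbb{D}$ with the hyperbolic distance. For any line segment $I\subset\Omega$ and any locally doubling measure $\mu$ in $\Omega$, $\mu(I)=0$.
   Context: A positive measure $\mu$ on $\Omega$ is locally doubling if there is $C>1$ such that $\mu(B)\le C\mu(B')$ for every ball $B\subset\Omega$ (in the distance of $\Omega$) of radius smaller than $1$, where $B'$ is the ball with the same center and half the radius. *)

theory Defs
  imports "HOL-Analysis.Analysis"
begin

definition hyp_dist :: "complex \<Rightarrow> complex \<Rightarrow> real" where
  "hyp_dist z w = artanh (cmod (z - w) / cmod (1 - cnj w * z))"

definition omega_ball :: "(complex \<Rightarrow> complex \<Rightarrow> real) \<Rightarrow> complex set \<Rightarrow> complex \<Rightarrow> real \<Rightarrow> complex set" where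
  "omega_ball d \<Omega> z r = {w \<in> \<Omega>. d z w < r}"

definition locally_doubling :: "(complex \<Rightarrow> complex \<Rightarrow> real) \<Rightarrow> complex set \<Rightarrow> complex measure \<Rightarrow> bool" where
  "locally_doubling d \<Omega> \<mu> \<longleftrightarrow>
     (\<exists>C>1. \<forall>z\<in>\<Omega>. \<forall>r. 0 < r \<and> r < 1 \<longrightarrow>
        emeasure \<mu> (omega_ball d \<Omega> z r) \<le> ennreal C * emeasure \<mu> (omega_ball d \<Omega> z (r / 2)))"

end

theory Submission
  imports Defs
begin

text \<open>Fix \<open>h\<close> and cover the segment \<open>I\<close> by about \<open>|b - a|/h\<close> balls \<open>B(x\<^sub>j, h)\<close> centred on it.
  Let \<open>y\<^sub>j\<close> be the point at distance \<open>3h\<close> from \<open>x\<^sub>j\<close> in a normal direction. Near the segment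
  the distance \<open>d\<close> is comparable to the Euclidean one, so \<open>B(x\<^sub>j, h)\<close> lies in a \<open>d\<close>-ball around
  \<open>y\<^sub>j\<close> that a fixed number of halvings shrinks into \<open>B(y\<^sub>j, h/2)\<close>; local doubling thus gives
  \<open>\<mu>(B(x\<^sub>j, h)) \<le> C \<mu>(B(y\<^sub>j, h/2))\<close> with \<open>C\<close> independent of \<open>h\<close>. The balls \<open>B(y\<^sub>j, h/2)\<close> are
  disjoint and lie in the strip of points at distance between \<open>5h/2\<close> and \<open>7h/2\<close> from the line,
  so \<open>\<mu>(I) \<le> C \<mu>(strip\<^sub>h)\<close>. For \<open>h = h\<^sub>0/2\<^sup>k\<close> these strips are disjoint and stay in a fixed
  compact neighbourhood of \<open>I\<close>, whence \<open>K \<mu>(I)\<close> is bounded by a finite constant for every \<open>K\<close>.\<close>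

lemma ennreal_eq_0_if_of_nat_mult_bounded:
  fixes x c :: ennreal
  assumes "\<And>n::nat. of_nat n * x \<le> c" and "c < \<infinity>"
  shows "x = 0"
proof (rule ccontr)
  assume "x \<noteq> 0"
  have "(\<lambda>n. of_nat n * x) \<longlonglongrightarrow> \<infinity> * x"
    using tendsto_mult_ennreal[OF of_nat_tendsto_top_ennreal tendsto_const] \<open>x \<noteq> 0\<close> by simp
  hence "\<infinity> * x \<le> c" by (rule LIMSEQ_le_const2) (use assms(1) in blast)
  thus False using assms(2) \<open>x \<noteq> 0\<close> by (simp add: ennreal_top_mult top_unique)
qed

lemma unit_direction:
  fixes a b :: complex
  obtains u where "cmod u = 1" "b - a = cmod (b - a) *\<^sub>R u"
proof (cases "a = b")
  case True
  then show ?thesis using that[of 1] by simp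
next
  case False
  then show ?thesis using that[of "sgn (b - a)"] by (simp add: norm_sgn sgn_div_norm)
qed

lemma closed_segment_eq_image_ray:
  assumes "b - a = l *\<^sub>R u" "0 \<le> l"
  shows "closed_segment a b = (\<lambda>t. a + t *\<^sub>R u) ` {0..l}"
proof -
  have "closed_segment (0 *\<^sub>R u) (l *\<^sub>R u) = (\<lambda>t. t *\<^sub>R u) ` closed_segment 0 l"
    by (rule closed_segment_linear_image) (rule linear_scaleR_left)
  hence "closed_segment (a + 0 *\<^sub>R u) (a + l *\<^sub>R u) = (\<lambda>t. a + t *\<^sub>R u) ` closed_segment 0 l"
    by (simp only: closed_segment_translation image_image)
  thus ?thesis using assms by (simp add: closed_segment_eq_real_ivl algebra_simps)
qed

lemma closed_segment_subset_UN_balls: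
  assumes "b - a = l *\<^sub>R u" "0 \<le> l" "norm u = 1" "0 < h"
  shows "closed_segment a b \<subseteq> (\<Union>j\<le>nat \<lfloor>l/h\<rfloor>. ball (a + (real j * h) *\<^sub>R u) h)"
proof
  fix w assume "w \<in> closed_segment a b"
  then obtain t where t: "0 \<le> t" "t \<le> l" and w: "w = a + t *\<^sub>R u"
    using closed_segment_eq_image_ray[OF assms(1,2)] by auto
  define j where "j = nat \<lfloor>t/h\<rfloor>"
  have "j \<le> nat \<lfloor>l/h\<rfloor>"
    unfolding j_def using t assms(4) by (intro nat_mono floor_mono divide_right_mono) auto
  moreover have "real j = of_int \<lfloor>t/h\<rfloor>"
    using t(1) assms(4) by (simp add: j_def)
  hence "real j * h \<le> t" "t < real j * h + h"
    using floor_divide_lower[OF assms(4), of t] floor_divide_upper[OF assms(4), of t]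
    by (simp_all add: algebra_simps)
  hence "dist (a + (real j * h) *\<^sub>R u) w < h"
    using assms(3) by (simp add: w dist_norm flip: scaleR_diff_left)
  ultimately show "w \<in> (\<Union>j\<le>nat \<lfloor>l/h\<rfloor>. ball (a + (real j * h) *\<^sub>R u) h)" by auto
qed

lemma grid_point_in_closed_segment:
  assumes "b - a = l *\<^sub>R u" "0 \<le> l" "0 < h" "j \<le> nat \<lfloor>l/h\<rfloor>"
  shows "a + (real j * h) *\<^sub>R u \<in> closed_segment a b"
proof -
  have "real j \<le> l / h"
    using order_trans[OF of_nat_mono[OF assms(4)] of_nat_floor] assms(2,3) by simp
  hence "real j * h \<in> {0..l}"
    using assms(3) by (simp add: pos_le_divide_eq)
  thus ?thesis unfolding closed_segment_eq_image_ray[OF assms(1,2)] by blast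
qed

text \<open>For \<open>cmod u = 1\<close>, \<open>Im (cnj u * (w - a))\<close> is the signed distance of \<open>w\<close> from the line
  through \<open>a\<close> in direction \<open>u\<close>.\<close>
definition strip :: "complex \<Rightarrow> complex \<Rightarrow> real \<Rightarrow> complex set" where
  "strip a u h = {w. 5*h/2 < Im (cnj u * (w - a)) \<and> Im (cnj u * (w - a)) < 7*h/2}"

lemma strip_borel [measurable]: "strip a u h \<in> sets borel"
  unfolding strip_def by measurable

lemma strip_disjoint: "0 < h \<Longrightarrow> h' \<le> h / 2 \<Longrightarrow> strip a u h \<inter> strip a u h' = {}"
  unfolding strip_def by auto

lemma ball_above_line_subset_strip:
  assumes "cmod u = 1" "0 < h"
  shows "ball (a + t *\<^sub>R u + (3*h) *\<^sub>R (\<i> * u)) (h/2) \<subseteq> strip a u h"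
proof
  fix w assume w: "w \<in> ball (a + t *\<^sub>R u + (3*h) *\<^sub>R (\<i> * u)) (h/2)"
  define c where "c = a + t *\<^sub>R u + (3*h) *\<^sub>R (\<i> * u)"
  have "cnj u * u = 1"
    using assms(1) complex_norm_square[of u] by (simp add: mult.commute)
  moreover have "cnj u * (c - a) = (of_real t + \<i> * of_real (3*h)) * (cnj u * u)"
    by (simp add: c_def scaleR_conv_of_real algebra_simps)
  ultimately have "Im (cnj u * (c - a)) = 3*h"
    by simp
  moreover have "\<bar>Im (cnj u * (w - c))\<bar> < h/2"
    using abs_Im_le_cmod[of "cnj u * (w - c)"] w assms(1)
    by (simp add: c_def norm_mult dist_norm norm_minus_commute)
  moreover have "Im (cnj u * (w - a)) = Im (cnj u * (w - c)) + Im (cnj u * (c - a))"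
    by (simp add: algebra_simps)
  ultimately show "w \<in> strip a u h"
    unfolding strip_def abs_less_iff by simp
qed

lemma disjoint_family_balls_on_grid:
  assumes "norm u = 1" "0 < h"
  shows "disjoint_family (\<lambda>j::nat. ball (a + (real j * h) *\<^sub>R u + v) (h/2))"
  unfolding disjoint_family_on_def
proof (intro ballI impI)
  fix j k :: nat assume "j \<noteq> k"
  hence "1 \<le> \<bar>real j - real k\<bar>" by linarith
  hence "h \<le> \<bar>real j - real k\<bar> * h" using assms(2) by simp
  also have "\<dots> = dist (a + (real j * h) *\<^sub>R u + v) (a + (real k * h) *\<^sub>R u + v)"
    using assms by (simp add: dist_norm abs_mult flip: scaleR_diff_left left_diff_distrib)
  finally show "ball (a + (real j * h) *\<^sub>R u + v) (h/2) \<inter> ball (a + (real k * h) *\<^sub>R u + v) (h/2) = {}"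
    by (intro disjoint_ballI) simp
qed

lemma sets_restrict_space_borel_iff:
  "\<Omega> \<in> sets borel \<Longrightarrow> A \<in> sets (restrict_space borel \<Omega>) \<longleftrightarrow> A \<subseteq> \<Omega> \<and> A \<in> sets borel"
  by (simp add: sets_restrict_space_iff)

lemma emeasure_closed_segment_le_strip:
  fixes \<mu> :: "complex measure"
  assumes sets_mu: "sets \<mu> = sets (restrict_space borel \<Omega>)" and "\<Omega> \<in> sets borel"
    and R: "cmod a \<le> R" "cmod b \<le> R" "cball 0 (R + 4*h) \<subseteq> \<Omega>"
    and u: "cmod u = 1" "b - a = cmod (b - a) *\<^sub>R u"
    and "0 < h"
    and displaced: "\<And>x. x \<in> closed_segment a b \<Longrightarrow> emeasure \<mu> (ball x h \<inter> \<Omega>)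
          \<le> ennreal C * emeasure \<mu> (ball (x + (3*h) *\<^sub>R (\<i> * u)) (h/2) \<inter> \<Omega>)"
  shows "emeasure \<mu> (closed_segment a b) \<le> ennreal C * emeasure \<mu> (strip a u h \<inter> cball 0 (R + 4*h))"
proof -
  define J where "J = {..nat \<lfloor>cmod (b - a) / h\<rfloor>}"
  define x where "x j = a + (real j * h) *\<^sub>R u" for j
  define B where "B j = ball (x j + (3*h) *\<^sub>R (\<i> * u)) (h/2) \<inter> \<Omega>" for j
  have sets_iff: "A \<in> sets \<mu> \<longleftrightarrow> A \<subseteq> \<Omega> \<and> A \<in> sets borel" for A
    using sets_mu sets_restrict_space_borel_iff[OF \<open>\<Omega> \<in> sets borel\<close>] by simp
  have segment_R: "closed_segment a b \<subseteq> cball 0 R"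
    using R(1,2) by (intro closed_segment_subset) auto
  hence segment_\<Omega>: "closed_segment a b \<subseteq> \<Omega>"
    using R(3) \<open>0 < h\<close> by fastforce
  have x_segment: "x j \<in> closed_segment a b" if "j \<in> J" for j
    using grid_point_in_closed_segment[OF u(2) _ \<open>0 < h\<close>] that by (simp add: x_def J_def)
  have ball_sets: "ball c r \<inter> \<Omega> \<in> sets \<mu>" for c r
    using sets_iff \<open>\<Omega> \<in> sets borel\<close> by auto
  have B_subset: "B j \<subseteq> strip a u h \<inter> cball 0 (R + 4*h)" if "j \<in> J" for j
  proof
    fix w assume w: "w \<in> B j"
    have "norm w \<le> norm (x j) + dist (x j) w"
      by (metis dist_0_norm dist_triangle)
    also have "dist (x j) w \<le> dist (x j) (x j + (3*h) *\<^sub>R (\<i> * u)) + dist (x j + (3*h) *\<^sub>R (\<i> * u)) w"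
      by (rule dist_triangle)
    finally have "norm w \<le> R + 4*h"
      using w segment_R x_segment[OF that] u(1) \<open>0 < h\<close> by (auto simp: B_def dist_norm norm_mult)
    moreover have "w \<in> strip a u h"
      using w ball_above_line_subset_strip[OF u(1) \<open>0 < h\<close>, of a "real j * h"]
      by (auto simp: B_def x_def)
    ultimately show "w \<in> strip a u h \<inter> cball 0 (R + 4*h)" by simp
  qed
  have "closed_segment a b \<subseteq> (\<Union>j\<in>J. ball (x j) h \<inter> \<Omega>)"
    using closed_segment_subset_UN_balls[OF u(2) _ u(1) \<open>0 < h\<close>] segment_\<Omega>
    by (auto simp: J_def x_def)
  hence "emeasure \<mu> (closed_segment a b) \<le> emeasure \<mu> (\<Union>j\<in>J. ball (x j) h \<inter> \<Omega>)"
    by (intro emeasure_mono sets.finite_UN) (auto simp: J_def ball_sets)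
  also have "\<dots> \<le> (\<Sum>j\<in>J. emeasure \<mu> (ball (x j) h \<inter> \<Omega>))"
    by (rule emeasure_subadditive_finite) (auto simp: J_def intro: ball_sets)
  also have "\<dots> \<le> (\<Sum>j\<in>J. ennreal C * emeasure \<mu> (B j))"
    unfolding B_def by (intro sum_mono displaced x_segment)
  also have "\<dots> = ennreal C * emeasure \<mu> (\<Union>j\<in>J. B j)"
  proof -
    have "disjoint_family_on B J"
      using disjoint_family_balls_on_grid[OF u(1) \<open>0 < h\<close>, of a "(3*h) *\<^sub>R (\<i> * u)"]
      by (auto simp: disjoint_family_on_def B_def x_def)
    hence "(\<Sum>j\<in>J. emeasure \<mu> (B j)) = emeasure \<mu> (\<Union>j\<in>J. B j)"
      using ball_sets by (intro sum_emeasure) (auto simp: J_def B_def[abs_def])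
    thus ?thesis
      by (simp flip: sum_distrib_left)
  qed
  also have "\<dots> \<le> ennreal C * emeasure \<mu> (strip a u h \<inter> cball 0 (R + 4*h))"
    using B_subset R(3) sets_iff by (intro mult_left_mono emeasure_mono) auto
  finally show ?thesis .
qed

text \<open>This is all the segment argument needs from local doubling.\<close>
definition displaced_doubling_on ::
    "complex measure \<Rightarrow> complex set \<Rightarrow> complex set \<Rightarrow> real \<Rightarrow> real \<Rightarrow> bool" where
  "displaced_doubling_on \<mu> \<Omega> S C h\<^sub>0 \<longleftrightarrow> (\<forall>x\<in>S. \<forall>n h. cmod n = 1 \<longrightarrow> 0 < h \<longrightarrow> h \<le> h\<^sub>0 \<longrightarrow>
     emeasure \<mu> (ball x h \<inter> \<Omega>) \<le> ennreal C * emeasure \<mu> (ball (x + (3*h) *\<^sub>R n) (h/2) \<inter> \<Omega>))"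

lemma displaced_doubling_on_subset:
  "displaced_doubling_on \<mu> \<Omega> S C h\<^sub>0 \<Longrightarrow> T \<subseteq> S \<Longrightarrow> displaced_doubling_on \<mu> \<Omega> T C h\<^sub>0"
  unfolding displaced_doubling_on_def by blast

lemma emeasure_closed_segment_eq_0:
  fixes \<mu> :: "complex measure"
  assumes sets_mu: "sets \<mu> = sets (restrict_space borel \<Omega>)" and "\<Omega> \<in> sets borel"
    and R: "cmod a \<le> R" "cmod b \<le> R" "cball 0 (R + 4*h\<^sub>0) \<subseteq> \<Omega>"
    and finite: "emeasure \<mu> (cball 0 (R + 4*h\<^sub>0)) < \<infinity>"
    and "0 < h\<^sub>0" and displaced: "displaced_doubling_on \<mu> \<Omega> (closed_segment a b) C h\<^sub>0"
  shows "emeasure \<mu> (closed_segment a b) = 0"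
proof -
  obtain u where u: "cmod u = 1" "b - a = cmod (b - a) *\<^sub>R u"
    by (rule unit_direction)
  define h where "h k = h\<^sub>0 / 2^k" for k :: nat
  define T where "T k = strip a u (h k) \<inter> cball 0 (R + 4 * h k)" for k
  have h: "0 < h k" "h k \<le> h\<^sub>0" for k
    using \<open>0 < h\<^sub>0\<close> by (auto simp: h_def divide_le_eq)
  have sets_iff: "A \<in> sets \<mu> \<longleftrightarrow> A \<subseteq> \<Omega> \<and> A \<in> sets borel" for A
    using sets_mu sets_restrict_space_borel_iff[OF \<open>\<Omega> \<in> sets borel\<close>] by simp
  have T_subset: "T k \<subseteq> cball 0 (R + 4*h\<^sub>0)" for k
    using h(2)[of k] by (auto simp: T_def)
  have T_sets: "T k \<in> sets \<mu>" for k
    using T_subset[of k] R(3) sets_iff by (auto simp: T_def)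
  have segment_le: "emeasure \<mu> (closed_segment a b) \<le> ennreal C * emeasure \<mu> (T k)" for k
    unfolding T_def
  proof (rule emeasure_closed_segment_le_strip[OF sets_mu \<open>\<Omega> \<in> sets borel\<close> R(1,2) _ u h(1)])
    show "cball 0 (R + 4 * h k) \<subseteq> \<Omega>"
      using R(3) h(2)[of k] by fastforce
    show "emeasure \<mu> (ball x (h k) \<inter> \<Omega>)
        \<le> ennreal C * emeasure \<mu> (ball (x + (3 * h k) *\<^sub>R (\<i> * u)) (h k / 2) \<inter> \<Omega>)"
      if "x \<in> closed_segment a b" for x
      using displaced that h[of k] u(1) by (simp add: displaced_doubling_on_def norm_mult)
  qed
  have "disjoint_family T"
    unfolding disjoint_family_on_def
  proof (intro ballI impI)
    have "T i \<inter> T j = {}" if "i < j" for i j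
    proof -
      have "(2::real) ^ Suc i \<le> 2 ^ j"
        using that by (intro power_increasing) auto
      hence "h j \<le> h i / 2"
        using \<open>0 < h\<^sub>0\<close> by (simp add: h_def field_simps)
      thus ?thesis
        using strip_disjoint[OF h(1)[of i], of "h j" a u] by (auto simp: T_def)
    qed
    thus "T i \<inter> T j = {}" if "i \<noteq> j" for i j
      using that by (metis Int_commute nat_neq_iff)
  qed
  have "of_nat K * emeasure \<mu> (closed_segment a b) \<le> ennreal C * emeasure \<mu> (cball 0 (R + 4*h\<^sub>0))" for K
  proof -
    have "of_nat K * emeasure \<mu> (closed_segment a b) \<le> (\<Sum>k<K. ennreal C * emeasure \<mu> (T k))"
      using sum_mono[of "{..<K}", OF segment_le] by simp
    also have "\<dots> = ennreal C * emeasure \<mu> (\<Union>k<K. T k)"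
      using sum_emeasure[of T "{..<K}" \<mu>] T_sets disjoint_family_on_mono[OF subset_UNIV \<open>disjoint_family T\<close>]
      by (simp add: image_subset_iff flip: sum_distrib_left)
    also have "\<dots> \<le> ennreal C * emeasure \<mu> (cball 0 (R + 4*h\<^sub>0))"
      using T_subset R(3) sets_iff by (intro mult_left_mono emeasure_mono) auto
    finally show ?thesis .
  qed
  from ennreal_eq_0_if_of_nat_mult_bounded[OF this] show ?thesis
    using finite by (simp add: ennreal_mult_less_top)
qed

lemma doubling_iterate:
  assumes doubling: "\<And>r. 0 < r \<Longrightarrow> r < 1 \<Longrightarrow>
      emeasure \<mu> (omega_ball d \<Omega> z r) \<le> ennreal C * emeasure \<mu> (omega_ball d \<Omega> z (r / 2))"
    and "0 \<le> C" "0 < r" "r < 1"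
  shows "emeasure \<mu> (omega_ball d \<Omega> z r) \<le> ennreal (C ^ m) * emeasure \<mu> (omega_ball d \<Omega> z (r / 2 ^ m))"
proof (induction m)
  case 0
  then show ?case by simp
next
  case (Suc m)
  have "r < 2 ^ m"
    using \<open>r < 1\<close> by (meson less_le_trans one_le_numeral one_le_power)
  hence "emeasure \<mu> (omega_ball d \<Omega> z (r / 2 ^ m)) \<le> ennreal C * emeasure \<mu> (omega_ball d \<Omega> z (r / 2 ^ m / 2))"
    using \<open>0 < r\<close> \<open>r < 1\<close> by (intro doubling) auto
  moreover have "r / 2 ^ m / 2 = r / 2 ^ Suc m"
    by simp
  ultimately have "emeasure \<mu> (omega_ball d \<Omega> z (r / 2 ^ m)) \<le> ennreal C * emeasure \<mu> (omega_ball d \<Omega> z (r / 2 ^ Suc m))"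
    by metis
  hence "ennreal (C ^ m) * emeasure \<mu> (omega_ball d \<Omega> z (r / 2 ^ m))
      \<le> ennreal (C ^ m) * (ennreal C * emeasure \<mu> (omega_ball d \<Omega> z (r / 2 ^ Suc m)))"
    by (rule mult_left_mono) simp
  also have "\<dots> = ennreal (C ^ Suc m) * emeasure \<mu> (omega_ball d \<Omega> z (r / 2 ^ Suc m))"
    using \<open>0 \<le> C\<close> by (simp only: power_Suc2 ennreal_mult zero_le_power mult.assoc)
  finally show ?case using Suc by (rule order_trans[rotated])
qed

lemma emeasure_ball_le_displaced_ball:
  fixes \<mu> :: "complex measure"
  assumes doubling: "\<And>r. 0 < r \<Longrightarrow> r < 1 \<Longrightarrow>
      emeasure \<mu> (omega_ball d \<Omega> y r) \<le> ennreal C * emeasure \<mu> (omega_ball d \<Omega> y (r / 2))"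
    and "0 \<le> C"
    and sets: "\<And>r. omega_ball d \<Omega> y r \<in> sets \<mu>" "ball y (h/2) \<inter> \<Omega> \<in> sets \<mu>"
    and upper: "\<And>w. w \<in> \<Omega> \<Longrightarrow> dist y w < 4*h \<Longrightarrow> d y w \<le> L * dist y w"
    and lower: "\<And>w. w \<in> \<Omega> \<Longrightarrow> dist y w \<le> L * d y w"
    and "0 < L" "0 < h" "4*L*h < 1" "8*L^2 \<le> 2^m" "dist x y \<le> 3*h"
  shows "emeasure \<mu> (ball x h \<inter> \<Omega>) \<le> ennreal (C ^ m) * emeasure \<mu> (ball y (h/2) \<inter> \<Omega>)"
proof -
  have outer: "ball x h \<inter> \<Omega> \<subseteq> omega_ball d \<Omega> y (4*L*h)"
  proof
    fix w assume w: "w \<in> ball x h \<inter> \<Omega>"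
    hence "dist y w < 4*h"
      using \<open>dist x y \<le> 3*h\<close> dist_triangle[of y w x] by (simp add: dist_commute)
    hence "d y w < L * (4*h)"
      using upper[of w] w \<open>0 < L\<close> by (auto intro: order.strict_trans1)
    thus "w \<in> omega_ball d \<Omega> y (4*L*h)"
      using w by (simp add: omega_ball_def mult.assoc)
  qed
  have inner: "omega_ball d \<Omega> y (4*L*h / 2^m) \<subseteq> ball y (h/2) \<inter> \<Omega>"
  proof
    fix w assume w: "w \<in> omega_ball d \<Omega> y (4*L*h / 2^m)"
    have "dist y w \<le> L * d y w"
      using w lower by (simp add: omega_ball_def)
    also have "\<dots> < L * (4*L*h / 2^m)"
      using w \<open>0 < L\<close> by (intro mult_strict_left_mono) (auto simp: omega_ball_def)
    also have "\<dots> = 8*L^2 * h / 2^m / 2"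
      by (simp add: power2_eq_square)
    also have "\<dots> \<le> h/2"
      using \<open>8*L^2 \<le> 2^m\<close> \<open>0 < h\<close> by (simp add: field_simps)
    finally show "w \<in> ball y (h/2) \<inter> \<Omega>"
      using w by (simp add: omega_ball_def)
  qed
  have "emeasure \<mu> (ball x h \<inter> \<Omega>) \<le> emeasure \<mu> (omega_ball d \<Omega> y (4*L*h))"
    using outer sets(1) by (rule emeasure_mono)
  also have "\<dots> \<le> ennreal (C ^ m) * emeasure \<mu> (omega_ball d \<Omega> y (4*L*h / 2^m))"
    using \<open>0 < L\<close> \<open>0 < h\<close> by (intro doubling_iterate[OF doubling \<open>0 \<le> C\<close> _ \<open>4*L*h < 1\<close>]) auto
  also have "\<dots> \<le> ennreal (C ^ m) * emeasure \<mu> (ball y (h/2) \<inter> \<Omega>)"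
    using inner sets(2) by (intro mult_left_mono emeasure_mono) auto
  finally show ?thesis .
qed

lemma norm_one_minus_cnj_mult_square:
  "(cmod (1 - cnj w * z))\<^sup>2 = (cmod (z - w))\<^sup>2 + (1 - (cmod z)\<^sup>2) * (1 - (cmod w)\<^sup>2)"
  unfolding cmod_power2 by (simp add: power2_eq_square algebra_simps)

lemma norm_diff_less_norm_one_minus_cnj_mult:
  assumes "cmod z < 1" "cmod w < 1"
  shows "cmod (z - w) < cmod (1 - cnj w * z)"
proof -
  have "0 < (1 - (cmod z)\<^sup>2) * (1 - (cmod w)\<^sup>2)"
    using assms by (simp add: abs_square_less_1)
  hence "(cmod (z - w))\<^sup>2 < (cmod (1 - cnj w * z))\<^sup>2"
    unfolding norm_one_minus_cnj_mult_square by simp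
  thus ?thesis by (rule power2_less_imp_less) simp
qed

lemma artanh_ge_half:
  fixes p :: real assumes "0 \<le> p" "p < 1" shows "p / 2 \<le> artanh p"
proof -
  have "ln ((1 - p) / (1 + p)) \<le> (1 - p) / (1 + p) - 1"
    using assms by (intro ln_le_minus_one) simp
  moreover have "ln ((1 + p) / (1 - p)) = - ln ((1 - p) / (1 + p))"
    using assms by (simp add: ln_div)
  moreover have "(1 - p) / (1 + p) - 1 = - 2 * p / (1 + p)"
    using assms by (simp add: field_simps)
  moreover have "p \<le> 2 * p / (1 + p)"
    using assms mult_left_mono[of p 1 p] by (simp add: field_simps)
  ultimately show ?thesis unfolding artanh_def by linarith
qed

lemma artanh_le_double:
  fixes p :: real assumes "0 \<le> p" "p \<le> 1/2" shows "artanh p \<le> 2 * p"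
proof -
  have "ln ((1 + p) / (1 - p)) \<le> (1 + p) / (1 - p) - 1"
    using assms by (intro ln_le_minus_one) simp
  moreover have "(1 + p) / (1 - p) - 1 = 2 * p / (1 - p)"
    using assms by (simp add: field_simps)
  moreover have "2 * p / (1 - p) \<le> 4 * p"
    using assms mult_left_mono[of "2*p" 1 p] by (simp add: field_simps)
  ultimately show ?thesis unfolding artanh_def by linarith
qed

lemma dist_le_hyp_dist:
  assumes "cmod z < 1" "cmod w < 1"
  shows "dist z w \<le> 4 * hyp_dist z w"
proof -
  define q where "q = cmod (1 - cnj w * z)"
  define p where "p = cmod (z - w) / q"
  have "cmod (z - w) < q"
    using norm_diff_less_norm_one_minus_cnj_mult[OF assms] by (simp add: q_def)
  hence "0 < q"
    by (rule le_less_trans[OF norm_ge_zero])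
  hence "p < 1"
    using \<open>cmod (z - w) < q\<close> by (simp add: p_def)
  have "0 \<le> p"
    by (simp add: p_def q_def)
  have "q \<le> 1 + cmod (cnj w * z)"
    unfolding q_def using norm_triangle_ineq4[of 1 "cnj w * z"] by simp
  also have "cmod (cnj w * z) \<le> 1"
    using assms by (simp add: norm_mult mult_le_one less_imp_le)
  finally have "q \<le> 2" by simp
  have "dist z w = p * q"
    using \<open>0 < q\<close> by (simp add: p_def dist_norm)
  also have "\<dots> \<le> p * 2"
    using \<open>q \<le> 2\<close> \<open>0 \<le> p\<close> by (simp add: mult_left_mono)
  also have "\<dots> \<le> 4 * artanh p"
    using artanh_ge_half[OF \<open>0 \<le> p\<close> \<open>p < 1\<close>] by simp
  finally show ?thesis unfolding hyp_dist_def p_def q_def .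
qed

lemma hyp_dist_le_dist:
  assumes "0 < \<rho>" "cmod z \<le> 1 - \<rho>" "cmod w < 1" "dist z w \<le> \<rho> / 2"
  shows "hyp_dist z w \<le> 2 / \<rho> * dist z w"
proof -
  define q where "q = cmod (1 - cnj w * z)"
  define p where "p = cmod (z - w) / q"
  have "1 - cmod (cnj w * z) \<le> q"
    unfolding q_def using norm_triangle_ineq2[of 1 "cnj w * z"] by simp
  moreover have "cmod (cnj w * z) \<le> cmod z"
    using assms(3) by (simp add: norm_mult mult_left_le_one_le less_imp_le)
  ultimately have "\<rho> \<le> q"
    using assms(2) by linarith
  hence "0 \<le> p" "p \<le> dist z w / \<rho>"
    using assms(1) by (simp_all add: p_def dist_norm frac_le)
  moreover have "dist z w / \<rho> \<le> 1/2"
    using assms(1,4) by (simp add: field_simps)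
  ultimately have "artanh p \<le> 2 * (dist z w / \<rho>)"
    using artanh_le_double[of p] by linarith
  thus ?thesis
    by (simp add: hyp_dist_def p_def q_def)
qed

lemma open_hyp_ball:
  assumes "cmod z < 1"
  shows "open (omega_ball hyp_dist (ball 0 1) z r)"
proof -
  have denominator_pos: "0 < cmod (1 - cnj w * z)" if "w \<in> ball 0 1" for w
    using norm_diff_less_norm_one_minus_cnj_mult[OF assms, of w] that
    by (auto intro: le_less_trans[OF norm_ge_zero])
  have pseudo: "cmod (z - w) / cmod (1 - cnj w * z) \<in> {-1<..<1}" if "w \<in> ball 0 1" for w
    using norm_diff_less_norm_one_minus_cnj_mult[OF assms, of w] denominator_pos[OF that] that
    by (auto simp: divide_less_eq intro: less_le_trans[of "-1" 0])
  have "continuous_on (ball 0 1) (\<lambda>w. cmod (z - w) / cmod (1 - cnj w * z))"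
    using denominator_pos by (intro continuous_intros) force
  hence "continuous_on (ball 0 1) (hyp_dist z)"
    unfolding hyp_dist_def[abs_def]
    by (rule continuous_on_compose2[OF continuous_on_artanh[OF order.refl]]) (use pseudo in auto)
  hence "open (ball 0 1 \<inter> hyp_dist z -` {..<r})"
    by (intro continuous_open_preimage) auto
  moreover have "omega_ball hyp_dist (ball 0 1) z r = ball 0 1 \<inter> hyp_dist z -` {..<r}"
    by (auto simp: omega_ball_def)
  ultimately show ?thesis by simp
qed

lemma displaced_doubling_plane:
  fixes \<mu> :: "complex measure"
  assumes sets_mu: "sets \<mu> = sets (restrict_space borel UNIV)"
    and "locally_doubling dist UNIV \<mu>"
  obtains C where "displaced_doubling_on \<mu> UNIV UNIV C (1/8)"
proof -
  obtain C\<^sub>0 where "1 < C\<^sub>0" and doubling: "\<And>y r. 0 < r \<Longrightarrow> r < 1 \<Longrightarrow>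
      emeasure \<mu> (omega_ball dist UNIV y r) \<le> ennreal C\<^sub>0 * emeasure \<mu> (omega_ball dist UNIV y (r / 2))"
    using \<open>locally_doubling dist UNIV \<mu>\<close> unfolding locally_doubling_def by blast
  have "omega_ball dist UNIV y r = ball y r" for y :: complex and r
    by (auto simp: omega_ball_def)
  hence sets: "omega_ball dist UNIV y r \<in> sets \<mu>" "ball y r \<inter> UNIV \<in> sets \<mu>" for y r
    using sets_mu by auto
  have "displaced_doubling_on \<mu> UNIV UNIV (C\<^sub>0 ^ 3) (1/8)"
    unfolding displaced_doubling_on_def
  proof (intro ballI allI impI)
    fix x n :: complex and h :: real
    assume "cmod n = 1" "0 < h" "h \<le> 1/8"
    then show "emeasure \<mu> (ball x h \<inter> UNIV)
        \<le> ennreal (C\<^sub>0 ^ 3) * emeasure \<mu> (ball (x + (3*h) *\<^sub>R n) (h/2) \<inter> UNIV)"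
      using \<open>1 < C\<^sub>0\<close> sets
      by (intro emeasure_ball_le_displaced_ball[where d = dist and L = 1] doubling)
        (auto simp: dist_norm)
  qed
  thus ?thesis by (rule that)
qed

lemma displaced_doubling_disc:
  fixes \<mu> :: "complex measure"
  assumes sets_mu: "sets \<mu> = sets (restrict_space borel (ball 0 1))"
    and "locally_doubling hyp_dist (ball 0 1) \<mu>" and "0 < \<rho>" "\<rho> \<le> 1"
  obtains C where "displaced_doubling_on \<mu> (ball 0 1) (cball 0 (1 - \<rho>)) C (\<rho>/32)"
proof -
  obtain C\<^sub>0 where "1 < C\<^sub>0" and doubling: "\<And>y r. y \<in> ball 0 1 \<Longrightarrow> 0 < r \<Longrightarrow> r < 1 \<Longrightarrow>
      emeasure \<mu> (omega_ball hyp_dist (ball 0 1) y r)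
        \<le> ennreal C\<^sub>0 * emeasure \<mu> (omega_ball hyp_dist (ball 0 1) y (r / 2))"
    using \<open>locally_doubling hyp_dist (ball 0 1) \<mu>\<close> unfolding locally_doubling_def by blast
  define L where "L = 4 / \<rho>"
  obtain m where "8 * L^2 < 2 ^ m"
    using real_arch_pow[of 2 "8 * L^2"] by auto
  have sets_iff: "A \<in> sets \<mu> \<longleftrightarrow> A \<subseteq> ball 0 1 \<and> A \<in> sets borel" for A
    using sets_mu by (simp add: sets_restrict_space_borel_iff)
  have "displaced_doubling_on \<mu> (ball 0 1) (cball 0 (1 - \<rho>)) (C\<^sub>0 ^ m) (\<rho>/32)"
    unfolding displaced_doubling_on_def
  proof (intro ballI allI impI)
    fix x n :: complex and h :: real
    assume x: "x \<in> cball 0 (1 - \<rho>)" and "cmod n = 1" "0 < h" "h \<le> \<rho>/32"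
    define y where "y = x + (3*h) *\<^sub>R n"
    have "dist x y = 3*h"
      using \<open>cmod n = 1\<close> \<open>0 < h\<close> by (simp add: y_def dist_norm)
    have "cmod y \<le> cmod x + 3*h"
      using norm_triangle_ineq[of x "(3*h) *\<^sub>R n"] \<open>cmod n = 1\<close> \<open>0 < h\<close> by (simp add: y_def)
    moreover have "cmod x \<le> 1 - \<rho>"
      using x by simp
    ultimately have y: "cmod y \<le> 1 - \<rho>/2"
      using \<open>h \<le> \<rho>/32\<close> \<open>0 < h\<close> by linarith
    have upper: "hyp_dist y w \<le> L * dist y w" if "w \<in> ball 0 1" "dist y w < 4*h" for w
      using hyp_dist_le_dist[of "\<rho>/2" y w] y that \<open>h \<le> \<rho>/32\<close> \<open>0 < \<rho>\<close> by (simp add: L_def)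
    have lower: "dist y w \<le> L * hyp_dist y w" if "w \<in> ball 0 1" for w
    proof -
      have "dist y w \<le> 4 * hyp_dist y w"
        using dist_le_hyp_dist[of y w] y that \<open>0 < \<rho>\<close> by simp
      also have "\<dots> \<le> L * hyp_dist y w"
      proof (rule mult_right_mono)
        show "4 \<le> L"
          using \<open>0 < \<rho>\<close> \<open>\<rho> \<le> 1\<close> by (simp add: L_def field_simps)
        show "0 \<le> hyp_dist y w"
          using \<open>dist y w \<le> 4 * hyp_dist y w\<close> zero_le_dist[of y w] by linarith
      qed
      finally show ?thesis .
    qed
    have sets: "omega_ball hyp_dist (ball 0 1) y r \<in> sets \<mu>" "ball y (h/2) \<inter> ball 0 1 \<in> sets \<mu>" for r
      using open_hyp_ball[of y r] y \<open>0 < \<rho>\<close> sets_iff by (auto simp: omega_ball_def)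
    show "emeasure \<mu> (ball x h \<inter> ball 0 1)
        \<le> ennreal (C\<^sub>0 ^ m) * emeasure \<mu> (ball (x + (3*h) *\<^sub>R n) (h/2) \<inter> ball 0 1)"
      unfolding y_def[symmetric]
    proof (rule emeasure_ball_le_displaced_ball[OF doubling _ sets upper lower])
      show "y \<in> ball 0 1"
        using y \<open>0 < \<rho>\<close> by simp
      show "4 * L * h < 1"
        using \<open>h \<le> \<rho>/32\<close> \<open>0 < \<rho>\<close> by (simp add: L_def field_simps)
    qed (use \<open>1 < C\<^sub>0\<close> \<open>0 < \<rho>\<close> \<open>0 < h\<close> \<open>8 * L^2 < 2 ^ m\<close> \<open>dist x y = 3*h\<close> in \<open>auto simp: L_def\<close>)
  qed
  thus ?thesis by (rule that)
qed

lemma displaced_doubling_near_segment: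
  fixes \<mu> :: "complex measure"
  assumes space: "(\<Omega> = UNIV \<and> d = dist) \<or> (\<Omega> = ball 0 1 \<and> d = hyp_dist)"
    and sets_mu: "sets \<mu> = sets (restrict_space borel \<Omega>)"
    and doubling: "locally_doubling d \<Omega> \<mu>"
    and ab: "a \<in> \<Omega>" "b \<in> \<Omega>"
  obtains C h\<^sub>0 where "0 < h\<^sub>0" "cball 0 (max (cmod a) (cmod b) + 4*h\<^sub>0) \<subseteq> \<Omega>"
    "displaced_doubling_on \<mu> \<Omega> (closed_segment a b) C h\<^sub>0"
proof -
  define R where "R = max (cmod a) (cmod b)"
  have segment_R: "closed_segment a b \<subseteq> cball 0 R"
    by (intro closed_segment_subset) (auto simp: R_def)
  from space show ?thesis
  proof
    assume "\<Omega> = UNIV \<and> d = dist"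
    hence \<Omega>: "\<Omega> = UNIV" and "d = dist" by auto
    obtain C where "displaced_doubling_on \<mu> UNIV UNIV C (1/8)"
      using sets_mu doubling unfolding \<Omega> \<open>d = dist\<close> by (rule displaced_doubling_plane)
    hence "displaced_doubling_on \<mu> \<Omega> (closed_segment a b) C (1/8)"
      unfolding \<Omega> by (rule displaced_doubling_on_subset) simp
    thus ?thesis
      by (rule that[rotated 2]) (auto simp: \<Omega>)
  next
    assume "\<Omega> = ball 0 1 \<and> d = hyp_dist"
    hence \<Omega>: "\<Omega> = ball 0 1" and "d = hyp_dist" by auto
    define \<rho> where "\<rho> = 1 - R"
    hence R_eq: "R = 1 - \<rho>" by simp
    have "0 < \<rho>" "\<rho> \<le> 1"
      using ab norm_ge_zero[of a] by (auto simp: \<Omega> \<rho>_def R_def le_max_iff_disj)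
    obtain C where "displaced_doubling_on \<mu> (ball 0 1) (cball 0 (1 - \<rho>)) C (\<rho>/32)"
      using sets_mu doubling \<open>0 < \<rho>\<close> \<open>\<rho> \<le> 1\<close> unfolding \<Omega> \<open>d = hyp_dist\<close>
      by (rule displaced_doubling_disc)
    hence "displaced_doubling_on \<mu> \<Omega> (closed_segment a b) C (\<rho>/32)"
      unfolding \<Omega> by (rule displaced_doubling_on_subset) (use segment_R R_eq in simp)
    moreover have "cball 0 (R + 4 * (\<rho>/32)) \<subseteq> \<Omega>"
      using \<open>0 < \<rho>\<close> by (auto simp: \<Omega> R_eq)
    ultimately show ?thesis
      using \<open>0 < \<rho>\<close> that[of "\<rho>/32" C] by (simp add: R_def)
  qed
qed

theorem lemma2:
  fixes \<Omega> :: "complex set" and d :: "complex \<Rightarrow> complex \<Rightarrow> real"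
    and \<mu> :: "complex measure" and a b :: complex
  assumes space: "(\<Omega> = UNIV \<and> d = dist) \<or> (\<Omega> = ball 0 1 \<and> d = hyp_dist)"
    and sets_mu: "sets \<mu> = sets (restrict_space borel \<Omega>)"
    and loc_finite: "\<And>K. compact K \<Longrightarrow> K \<subseteq> \<Omega> \<Longrightarrow> emeasure \<mu> K < \<infinity>"
    and doubling: "locally_doubling d \<Omega> \<mu>"
    and ab: "a \<in> \<Omega>" "b \<in> \<Omega>"
  shows "emeasure \<mu> (closed_segment a b) = 0"
proof -
  obtain C h\<^sub>0 where "0 < h\<^sub>0" and cball: "cball 0 (max (cmod a) (cmod b) + 4*h\<^sub>0) \<subseteq> \<Omega>"
    and displaced: "displaced_doubling_on \<mu> \<Omega> (closed_segment a b) C h\<^sub>0"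
    using displaced_doubling_near_segment[OF space sets_mu doubling ab] by blast
  have "open \<Omega>"
    using space by auto
  show ?thesis
  proof (rule emeasure_closed_segment_eq_0[OF sets_mu _ _ _ cball _ \<open>0 < h\<^sub>0\<close> displaced])
    show "emeasure \<mu> (cball 0 (max (cmod a) (cmod b) + 4*h\<^sub>0)) < \<infinity>"
      using cball by (rule loc_finite[OF compact_cball])
  qed (use \<open>open \<Omega>\<close> in auto)
qed

end
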